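(* Let $\lambda_1,\dots,\lambda_n>0$, $S=\{\lambda_1,\dots,\lambda_n\}$ and $\Lambda=\big(\lambda_i\lambda_j+(\lambda_i\lambda_j)^{-1}\big)_{i,j=1}^n\in P(n)$. Then: if all $\lambda_i$ are equal, $I(\Lambda)=\lambda_1^2+\lambda_1^{-2}$; if $S=\{\lambda,\mu\}$ with $\lambda\neq\mu$, then $I(\Lambda)=\dfrac{(\lambda+\mu)^2}{1+\lambda^2\mu^2}$; if $S$ has more than two elements, $I(\Lambda)=0$. In particular $I(\Lambda)\neq0$ iff $S$ has at most two elements.
   Context: $P(n)$ denotes positive semidefinite complex $n\times n$ matrices. With $P$ the all-ones $n\times n$ matrix, $I(A)=\max\{\lambda\ge0: A-\lambda P\ge0\}$. *)

theory Defs
  imports "HOL-Analysis.Analysis"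
begin

definition psd :: "complex ^'n ^'n \<Rightarrow> bool" where
  "psd A \<longleftrightarrow> (\<forall>i j. A $ i $ j = cnj (A $ j $ i)) \<and>
     (\<forall>x :: complex ^'n. 0 \<le> Re (\<Sum>i\<in>UNIV. \<Sum>j\<in>UNIV. cnj (x $ i) * A $ i $ j * x $ j))"

definition ones_mat :: "complex ^'n ^'n" where
  "ones_mat = (\<chi> i j. 1)"

definition Ind :: "complex ^'n ^'n \<Rightarrow> real" where
  "Ind A = (GREATEST t. t \<ge> 0 \<and> psd (A - t *\<^sub>R ones_mat))"

end

theory Submission
  imports Defs
begin

(* \<Lambda> is the Gram matrix of the plane vectors v_k = (\<lambda>_k, 1/\<lambda>_k), so
   x^* (\<Lambda> - t P) x = |\<Sum> \<lambda>_k x_k|^2 + |\<Sum> x_k / \<lambda>_k|^2 - t |\<Sum> x_k|^2.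
   If p \<lambda>_k + q / \<lambda>_k = c for all k, the Cauchy-Schwarz inequality in the plane gives
   \<Lambda> - t P \<ge> 0 for t = c^2 / (p^2 + q^2), and a real test vector w whose two moments
   (\<Sum> \<lambda>_k w_k, \<Sum> w_k / \<lambda>_k) are parallel to (p, q) shows that this t is optimal.
   One value l admits (p, q) = (l, 1/l); two values l, m admit (p, q) = (1, l m), because
   \<lambda> + l m / \<lambda> = l + m on {l, m}. For three distinct values a, b, c the test vector
   (a (b^2 - c^2), b (c^2 - a^2), c (a^2 - b^2)) kills both moments but not \<Sum> w_k,
   so then I(\<Lambda>) = 0. *)

definition gram_mat :: "('n::finite \<Rightarrow> real) \<Rightarrow> ('n \<Rightarrow> real) \<Rightarrow> complex^'n^'n" where
  "gram_mat a b = (\<chi> i j. complex_of_real (a i * a j + b i * b j))"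

lemma quadratic_form_outer_product:
  fixes a :: "'n::finite \<Rightarrow> real" and x :: "complex^'n"
  shows "(\<Sum>i\<in>UNIV. \<Sum>j\<in>UNIV. cnj (x$i) * complex_of_real (a i * a j) * x$j)
     = complex_of_real ((cmod (\<Sum>i\<in>UNIV. complex_of_real (a i) * x$i))\<^sup>2)"
  unfolding complex_norm_square by (simp add: sum_distrib_left sum_distrib_right mult_ac)

lemma gram_minus_ones_entry:
  "(gram_mat a b - t *\<^sub>R ones_mat) $ i $ j = complex_of_real (a i * a j + b i * b j - t)"
  by (simp add: gram_mat_def ones_mat_def of_real_def scaleR_diff_left)

lemma quadratic_form_gram_minus_ones:
  fixes a b :: "'n::finite \<Rightarrow> real" and x :: "complex^'n"
  shows "(\<Sum>i\<in>UNIV. \<Sum>j\<in>UNIV. cnj (x$i) * (gram_mat a b - t *\<^sub>R ones_mat) $ i $ j * x$j)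
     = complex_of_real ((cmod (\<Sum>i\<in>UNIV. complex_of_real (a i) * x$i))\<^sup>2
         + (cmod (\<Sum>i\<in>UNIV. complex_of_real (b i) * x$i))\<^sup>2 - t * (cmod (\<Sum>i\<in>UNIV. x$i))\<^sup>2)"
proof -
  have "(\<Sum>i\<in>UNIV. \<Sum>j\<in>UNIV. cnj (x$i) * (gram_mat a b - t *\<^sub>R ones_mat) $ i $ j * x$j)
      = (\<Sum>i\<in>UNIV. \<Sum>j\<in>UNIV. cnj (x$i) * complex_of_real (a i * a j) * x$j)
        + (\<Sum>i\<in>UNIV. \<Sum>j\<in>UNIV. cnj (x$i) * complex_of_real (b i * b j) * x$j)
        - of_real t * (\<Sum>i\<in>UNIV. \<Sum>j\<in>UNIV. cnj (x$i) * complex_of_real (1 * 1) * x$j)"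
    unfolding gram_minus_ones_entry
    by (simp add: algebra_simps sum.distrib sum_subtractf sum_distrib_left)
  also have "\<dots> = complex_of_real ((cmod (\<Sum>i\<in>UNIV. complex_of_real (a i) * x$i))\<^sup>2
         + (cmod (\<Sum>i\<in>UNIV. complex_of_real (b i) * x$i))\<^sup>2 - t * (cmod (\<Sum>i\<in>UNIV. x$i))\<^sup>2)"
    unfolding quadratic_form_outer_product by simp
  finally show ?thesis .
qed

lemma psd_gram_minus_ones_iff:
  "psd (gram_mat a b - t *\<^sub>R ones_mat) \<longleftrightarrow>
    (\<forall>x::complex^'n. t * (cmod (\<Sum>i\<in>UNIV. x$i))\<^sup>2 \<le>
       (cmod (\<Sum>i\<in>UNIV. complex_of_real (a i) * x$i))\<^sup>2
       + (cmod (\<Sum>i\<in>UNIV. complex_of_real (b i) * x$i))\<^sup>2)"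
proof -
  have "\<forall>i j. (gram_mat a b - t *\<^sub>R ones_mat) $ i $ j = cnj ((gram_mat a b - t *\<^sub>R ones_mat) $ j $ i)"
    unfolding gram_minus_ones_entry by (simp add: mult.commute)
  then show ?thesis
    unfolding psd_def quadratic_form_gram_minus_ones by simp
qed

lemma psd_gram_mat: "psd (gram_mat a b)"
  using psd_gram_minus_ones_iff[of a b 0] by simp

lemma psd_gram_minus_ones_real_bound:
  fixes w :: "'n::finite \<Rightarrow> real"
  assumes "psd (gram_mat a b - t *\<^sub>R ones_mat)"
  shows "t * (\<Sum>i\<in>UNIV. w i)\<^sup>2 \<le> (\<Sum>i\<in>UNIV. a i * w i)\<^sup>2 + (\<Sum>i\<in>UNIV. b i * w i)\<^sup>2"
proof -
  have "t * (cmod (\<Sum>i\<in>UNIV. (\<chi> k. complex_of_real (w k))$i))\<^sup>2 \<le>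
      (cmod (\<Sum>i\<in>UNIV. complex_of_real (a i) * (\<chi> k. complex_of_real (w k))$i))\<^sup>2
      + (cmod (\<Sum>i\<in>UNIV. complex_of_real (b i) * (\<chi> k. complex_of_real (w k))$i))\<^sup>2"
    using assms unfolding psd_gram_minus_ones_iff by blast
  then show ?thesis
    by (simp flip: of_real_sum of_real_mult)
qed

lemma Ind_eqI:
  assumes "0 \<le> t0" "psd (A - t0 *\<^sub>R ones_mat)"
    and "\<And>t. 0 \<le> t \<Longrightarrow> psd (A - t *\<^sub>R ones_mat) \<Longrightarrow> t \<le> t0"
  shows "Ind A = t0"
  unfolding Ind_def using assms by (intro Greatest_equality) auto

lemma power2_lin_comb_le: "(p * x + q * y)\<^sup>2 \<le> (p\<^sup>2 + q\<^sup>2) * (x\<^sup>2 + y\<^sup>2)"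
  for p q x y :: real
proof -
  have "0 \<le> (q * x - p * y)\<^sup>2" by simp
  then show ?thesis by (simp add: power2_eq_square algebra_simps)
qed

lemma psd_gram_minus_ones_if_combination:
  fixes a b :: "'n::finite \<Rightarrow> real"
  assumes comb: "\<And>k. p * a k + q * b k = c"
  shows "psd (gram_mat a b - (c\<^sup>2 / (p\<^sup>2 + q\<^sup>2)) *\<^sub>R ones_mat)"
  unfolding psd_gram_minus_ones_iff
proof
  fix x :: "complex^'n"
  define s P Q where "s = (\<Sum>i\<in>UNIV. x$i)"
    and "P = (\<Sum>i\<in>UNIV. complex_of_real (a i) * x$i)"
    and "Q = (\<Sum>i\<in>UNIV. complex_of_real (b i) * x$i)"
  have "of_real c * x$i = of_real p * (of_real (a i) * x$i) + of_real q * (of_real (b i) * x$i)" for i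
    unfolding comb[of i, symmetric] by (simp add: algebra_simps)
  then have "of_real c * s = of_real p * P + of_real q * Q"
    by (simp add: s_def P_def Q_def sum_distrib_left flip: sum.distrib)
  then have "\<bar>c\<bar> * cmod s \<le> \<bar>p\<bar> * cmod P + \<bar>q\<bar> * cmod Q"
    by (metis norm_mult norm_of_real norm_triangle_ineq)
  then have "(\<bar>c\<bar> * cmod s)\<^sup>2 \<le> (\<bar>p\<bar> * cmod P + \<bar>q\<bar> * cmod Q)\<^sup>2"
    by (simp add: power_mono)
  also have "\<dots> \<le> (p\<^sup>2 + q\<^sup>2) * ((cmod P)\<^sup>2 + (cmod Q)\<^sup>2)"
    using power2_lin_comb_le[of "\<bar>p\<bar>" "cmod P" "\<bar>q\<bar>" "cmod Q"] by simp
  finally have "c\<^sup>2 * (cmod s)\<^sup>2 \<le> ((cmod P)\<^sup>2 + (cmod Q)\<^sup>2) * (p\<^sup>2 + q\<^sup>2)"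
    by (simp add: power_mult_distrib mult.commute)
  moreover have "p\<^sup>2 + q\<^sup>2 = 0 \<or> 0 < p\<^sup>2 + q\<^sup>2"
    using sum_power2_ge_zero[of p q] by linarith
  ultimately show "c\<^sup>2 / (p\<^sup>2 + q\<^sup>2) * (cmod s)\<^sup>2 \<le> (cmod P)\<^sup>2 + (cmod Q)\<^sup>2"
    by (auto simp: pos_divide_le_eq)
qed

lemma psd_gram_minus_ones_le_if_combination:
  fixes a b w :: "'n::finite \<Rightarrow> real"
  assumes psd: "psd (gram_mat a b - t *\<^sub>R ones_mat)"
    and comb: "\<And>k. p * a k + q * b k = c"
    and wa: "(\<Sum>k\<in>UNIV. a k * w k) = r * p" and wb: "(\<Sum>k\<in>UNIV. b k * w k) = r * q"
    and "r \<noteq> 0" and "p \<noteq> 0 \<or> q \<noteq> 0"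
  shows "t \<le> c\<^sup>2 / (p\<^sup>2 + q\<^sup>2)"
proof -
  have "c * w k = p * (a k * w k) + q * (b k * w k)" for k
    unfolding comb[of k, symmetric] by (simp add: algebra_simps)
  then have "c * (\<Sum>k\<in>UNIV. w k) = p * (\<Sum>k\<in>UNIV. a k * w k) + q * (\<Sum>k\<in>UNIV. b k * w k)"
    by (simp add: sum_distrib_left sum.distrib)
  also have "\<dots> = r * (p\<^sup>2 + q\<^sup>2)"
    by (simp add: wa wb power2_eq_square algebra_simps)
  finally have sum_w: "c * (\<Sum>k\<in>UNIV. w k) = r * (p\<^sup>2 + q\<^sup>2)" .
  have "t * (\<Sum>k\<in>UNIV. w k)\<^sup>2 \<le> (r * p)\<^sup>2 + (r * q)\<^sup>2"
    using psd_gram_minus_ones_real_bound[OF psd, of w] by (simp add: wa wb)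
  then have "c\<^sup>2 * (t * (\<Sum>k\<in>UNIV. w k)\<^sup>2) \<le> c\<^sup>2 * ((r * p)\<^sup>2 + (r * q)\<^sup>2)"
    by (simp add: mult_left_mono)
  moreover have "c\<^sup>2 * (t * (\<Sum>k\<in>UNIV. w k)\<^sup>2) = t * (r * (p\<^sup>2 + q\<^sup>2))\<^sup>2"
    by (simp flip: sum_w add: power_mult_distrib)
  ultimately have "(t * (p\<^sup>2 + q\<^sup>2)) * (r\<^sup>2 * (p\<^sup>2 + q\<^sup>2)) \<le> c\<^sup>2 * (r\<^sup>2 * (p\<^sup>2 + q\<^sup>2))"
    by (simp add: power2_eq_square algebra_simps)
  moreover have "0 < p\<^sup>2 + q\<^sup>2"
    using \<open>p \<noteq> 0 \<or> q \<noteq> 0\<close> by (simp add: sum_power2_gt_zero_iff)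
  ultimately show ?thesis
    using \<open>r \<noteq> 0\<close> by (simp add: pos_le_divide_eq)
qed

lemma Ind_gram_eq_if_combination:
  fixes a b w :: "'n::finite \<Rightarrow> real"
  assumes "\<And>k. p * a k + q * b k = c"
    and "(\<Sum>k\<in>UNIV. a k * w k) = r * p" and "(\<Sum>k\<in>UNIV. b k * w k) = r * q"
    and "r \<noteq> 0" and "p \<noteq> 0 \<or> q \<noteq> 0"
  shows "Ind (gram_mat a b) = c\<^sup>2 / (p\<^sup>2 + q\<^sup>2)"
proof (rule Ind_eqI)
  show "psd (gram_mat a b - (c\<^sup>2 / (p\<^sup>2 + q\<^sup>2)) *\<^sub>R ones_mat)"
    using assms(1) by (rule psd_gram_minus_ones_if_combination)
  show "t \<le> c\<^sup>2 / (p\<^sup>2 + q\<^sup>2)" if "psd (gram_mat a b - t *\<^sub>R ones_mat)" for t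
    using that assms by (rule psd_gram_minus_ones_le_if_combination)
qed simp

lemma Ind_gram_eq_0:
  fixes a b w :: "'n::finite \<Rightarrow> real"
  assumes "(\<Sum>k\<in>UNIV. w k) \<noteq> 0"
    and "(\<Sum>k\<in>UNIV. a k * w k) = 0" and "(\<Sum>k\<in>UNIV. b k * w k) = 0"
  shows "Ind (gram_mat a b) = 0"
proof (rule Ind_eqI)
  fix t assume "psd (gram_mat a b - t *\<^sub>R ones_mat)"
  from psd_gram_minus_ones_real_bound[OF this, of w]
  show "t \<le> 0"
    using assms by (simp add: mult_le_0_iff)
qed (simp_all add: psd_gram_mat)

lemma Ind_gram_inverse_const:
  fixes lam :: "'n::finite \<Rightarrow> real"
  assumes pos: "\<And>k. 0 < lam k" and range: "range lam = {l}"
  shows "Ind (gram_mat lam (\<lambda>k. inverse (lam k))) = l\<^sup>2 + inverse (l\<^sup>2)"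
proof -
  have lam: "lam k = l" for k
    using range by auto
  have "0 < l"
    using pos range by (metis imageE insertI1)
  have "Ind (gram_mat lam (\<lambda>k. inverse (lam k))) = (l\<^sup>2 + inverse (l\<^sup>2))\<^sup>2 / (l\<^sup>2 + (inverse l)\<^sup>2)"
    by (rule Ind_gram_eq_if_combination[where w = "\<lambda>_. 1" and r = "real CARD('n)"])
      (use \<open>0 < l\<close> in \<open>simp_all add: lam power2_eq_square\<close>)
  also have "\<dots> = l\<^sup>2 + inverse (l\<^sup>2)"
    using \<open>0 < l\<close> by (simp add: power_inverse power2_eq_square)
  finally show ?thesis .
qed

lemma Ind_gram_inverse_two_values:
  fixes lam :: "'n::finite \<Rightarrow> real"
  assumes pos: "\<And>k. 0 < lam k" and range: "range lam = {l, m}" and "l \<noteq> m"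
  shows "Ind (gram_mat lam (\<lambda>k. inverse (lam k))) = (l + m)\<^sup>2 / (1 + l\<^sup>2 * m\<^sup>2)"
proof -
  obtain i j where i: "lam i = l" and j: "lam j = m"
    using range by (metis imageE insertI1 insertI2)
  have "0 < l" "0 < m"
    using pos i j by auto
  have comb: "1 * lam k + (l * m) * inverse (lam k) = l + m" for k
    using rangeI[of lam k] range pos[of k] by (auto simp: field_simps)
  \<comment> \<open>scaled so that the moments of w are (l^2 - m^2) (1, l m)\<close>
  define w where "w k = (l - l\<^sup>2 * m^3) * of_bool (k = i) + (l^3 * m\<^sup>2 - m) * of_bool (k = j)" for k
  have sum_w: "(\<Sum>k\<in>UNIV. f k * w k) = f i * (l - l\<^sup>2 * m^3) + f j * (l^3 * m\<^sup>2 - m)" for f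
    by (simp add: w_def distrib_left sum.distrib mult.assoc[symmetric])
  have "Ind (gram_mat lam (\<lambda>k. inverse (lam k))) = (l + m)\<^sup>2 / (1\<^sup>2 + (l * m)\<^sup>2)"
  proof (rule Ind_gram_eq_if_combination[OF comb, where w = w and r = "l\<^sup>2 - m\<^sup>2"])
    show "(\<Sum>k\<in>UNIV. lam k * w k) = (l\<^sup>2 - m\<^sup>2) * 1"
      by (simp add: sum_w i j power2_eq_square power3_eq_cube algebra_simps)
    show "(\<Sum>k\<in>UNIV. inverse (lam k) * w k) = (l\<^sup>2 - m\<^sup>2) * (l * m)"
      unfolding sum_w i j using \<open>0 < l\<close> \<open>0 < m\<close>
      by (simp add: power2_eq_square power3_eq_cube field_simps)
    show "l\<^sup>2 - m\<^sup>2 \<noteq> 0"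
      using \<open>0 < l\<close> \<open>0 < m\<close> \<open>l \<noteq> m\<close> by (simp add: power2_eq_iff_nonneg)
  qed simp
  then show ?thesis
    by (simp add: power_mult_distrib)
qed

lemma Ind_gram_inverse_three_values:
  fixes lam :: "'n::finite \<Rightarrow> real"
  assumes pos: "\<And>k. 0 < lam k" and "2 < card (range lam)"
  shows "Ind (gram_mat lam (\<lambda>k. inverse (lam k))) = 0"
proof -
  obtain T where "T \<subseteq> range lam" "card T = 3"
    using obtain_subset_with_card_n[of 3 "range lam"] assms(2) by auto
  then obtain x y z where "{x, y, z} \<subseteq> range lam" "x \<noteq> y" "y \<noteq> z" "x \<noteq> z"
    by (auto simp: card_3_iff)
  then obtain i j k where i: "lam i = x" and j: "lam j = y" and k: "lam k = z"
    by (metis imageE insert_subset)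
  have "x \<noteq> 0" "y \<noteq> 0" "z \<noteq> 0"
    using pos i j k by (metis less_irrefl)+
  define w where "w n = x * (y\<^sup>2 - z\<^sup>2) * of_bool (n = i) + y * (z\<^sup>2 - x\<^sup>2) * of_bool (n = j)
      + z * (x\<^sup>2 - y\<^sup>2) * of_bool (n = k)" for n
  have sum_w: "(\<Sum>n\<in>UNIV. f n * w n)
      = f i * (x * (y\<^sup>2 - z\<^sup>2)) + f j * (y * (z\<^sup>2 - x\<^sup>2)) + f k * (z * (x\<^sup>2 - y\<^sup>2))" for f
    by (simp add: w_def distrib_left sum.distrib mult.assoc[symmetric])
  show ?thesis
  proof (rule Ind_gram_eq_0[where w = w])
    have "(\<Sum>n\<in>UNIV. 1 * w n) = - ((x - y) * (y - z) * (x - z))"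
      unfolding sum_w by (simp add: power2_eq_square algebra_simps)
    then show "(\<Sum>n\<in>UNIV. w n) \<noteq> 0"
      using \<open>x \<noteq> y\<close> \<open>y \<noteq> z\<close> \<open>x \<noteq> z\<close> by simp
    show "(\<Sum>n\<in>UNIV. lam n * w n) = 0"
      by (simp add: sum_w i j k power2_eq_square algebra_simps)
    show "(\<Sum>n\<in>UNIV. inverse (lam n) * w n) = 0"
      unfolding sum_w i j k using \<open>x \<noteq> 0\<close> \<open>y \<noteq> 0\<close> \<open>z \<noteq> 0\<close>
      by (simp add: power2_eq_square field_simps)
  qed
qed

lemma Ind_gram_inverse_pos:
  fixes lam :: "'n::finite \<Rightarrow> real"
  assumes pos: "\<And>k. 0 < lam k" and "card (range lam) \<le> 2"
  shows "0 < Ind (gram_mat lam (\<lambda>k. inverse (lam k)))"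
proof -
  have "card (range lam) \<noteq> 0"
    by simp
  then have "card (range lam) = 1 \<or> card (range lam) = 2"
    using assms(2) by linarith
  then consider l where "range lam = {l}" | l m where "range lam = {l, m}" "l \<noteq> m"
    by (auto simp: card_1_singleton_iff card_2_iff)
  then show ?thesis
  proof cases
    case 1
    then have "0 < l"
      using pos by (metis rangeI singletonD)
    then show ?thesis
      using Ind_gram_inverse_const[of lam, OF pos 1] by (simp add: add_pos_pos)
  next
    case 2
    then have "0 < l" "0 < m"
      using pos by (metis insertI1 insertI2 imageE)+
    then show ?thesis
      using Ind_gram_inverse_two_values[of lam, OF pos 2] by (simp add: add_pos_nonneg)
  qed
qed

theorem mainTheorem13:
  fixes lam :: "'n::finite \<Rightarrow> real"
  assumes pos: "\<And>i. lam i > 0"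
  defines "S \<equiv> range lam"
    and "L \<equiv> (\<chi> i j. complex_of_real (lam i * lam j + inverse (lam i * lam j))) :: complex^'n^'n"
  shows "psd L
    \<and> (\<forall>l. S = {l} \<longrightarrow> Ind L = l^2 + inverse (l^2))
    \<and> (\<forall>l m. l \<noteq> m \<and> S = {l, m} \<longrightarrow> Ind L = (l + m)^2 / (1 + l^2 * m^2))
    \<and> (card S > 2 \<longrightarrow> Ind L = 0)
    \<and> (Ind L \<noteq> 0 \<longleftrightarrow> card S \<le> 2)"
proof -
  have L: "L = gram_mat lam (\<lambda>k. inverse (lam k))"
    unfolding L_def gram_mat_def by simp
  have "psd L"
    unfolding L by (rule psd_gram_mat)
  moreover have "\<forall>l. S = {l} \<longrightarrow> Ind L = l^2 + inverse (l^2)"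
    unfolding L S_def using Ind_gram_inverse_const[of lam] pos by blast
  moreover have "\<forall>l m. l \<noteq> m \<and> S = {l, m} \<longrightarrow> Ind L = (l + m)^2 / (1 + l^2 * m^2)"
    unfolding L S_def using Ind_gram_inverse_two_values[of lam] pos by blast
  moreover have "card S > 2 \<longrightarrow> Ind L = 0"
    unfolding L S_def using Ind_gram_inverse_three_values[of lam] pos by blast
  moreover have "card S \<le> 2 \<longrightarrow> 0 < Ind L"
    unfolding L S_def using Ind_gram_inverse_pos[of lam] pos by blast
  ultimately show ?thesis
    by auto
qed

end
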